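(* Let $\phi$ be a PDL formula in negation normal form, and let $T$ be an expanded tableau whose root is $r=(\{\phi\} :: [\,],\bot,\emptyset,\emptyset :: \mathrm{stat},\mathrm{uev})$, with $\mathrm{stat}$ and $\mathrm{uev}$ determined from the children of $r$ by the rules. If $r$ is not open (i.e. $\mathrm{stat}_r\ne\mathbf{open}$), then $\phi$ is not satisfiable.
   Context: Syntax and semantics of PDL. Fix disjoint countably infinite sets $\mathrm{AFml}$ (atoms $p,q,\dots$) and $\mathrm{APrg}$ (atomic programs $a,b,\dots$). Formulae and programs are defined by mutual induction. Atoms are formulae and atomic programs are programs. If $\varphi,\psi$ are formulae, then $\neg\varphi$, $\varphi\wedge\psi$, $\varphi\vee\psi$ are formulae and $\varphi?$ is a program. If $\varphi$ is a formula and $\alpha$ a program, then $\langle\alpha\rangle\varphi$ and $[\alpha]\varphi$ are formulae. If $\alpha,\beta$ are programs, then $\alpha;\beta$, $\alpha\cup\beta$ and $\alpha^*$ are programs. A model $M=(W,R,V)$ has a nonempty set $W$, relations $R_a\subseteq W\times W$ for $a\in\mathrm{APrg}$, and $V:\mathrm{AFml}\to2^W$. Truth and program relations are defined as follows. - Booleans are standard: $p$ holds at $w$ iff $w\in V(p)$, and $\neg,\wedge,\vee$ are interpreted as usual. - $\langle\alpha\rangle\varphi$ holds at $w$ iff some $v$ with $(w,v)\in[\![\alpha]\!]$ satisfies $\varphi$; $[\alpha]\varphi$ holds at $w$ iff all such $v$ satisfy $\varphi$. - $[\![a]\!]=R_a$; $[\![\alpha\cup\beta]\!]=[\![\alpha]\!]\cup[\![\beta]\!]$;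 $[\![\alpha;\beta]\!]$ is relational composition of $[\![\alpha]\!]$ and $[\![\beta]\!]$; $[\![\alpha^*]\!]$ is the reflexive–transitive closure of $[\![\alpha]\!]$; $[\![\varphi?]\!]=\{(w,w): w\text{ satisfies }\varphi\}$. - $\phi$ is satisfiable iff it holds at some world of some model. A $\langle\rangle$-formula is any $\langle\alpha\rangle\varphi$. It is a non-atomic diamond formula if $\alpha\notin\mathrm{APrg}$. A $\langle{*}\rangle$-formula is any $\langle\alpha^*\rangle\varphi$. NNF: $\neg$ occurs only directly before atoms. $\mathrm{nnf}(\varphi)$ is the equivalent NNF formula obtained by pushing negations inward, and ${\sim}\varphi:=\mathrm{nnf}(\neg\varphi)$. Let $\mathrm{ppre}(\varphi):=\{\langle\alpha_1\rangle\cdots\langle\alpha_k\rangle\varphi:k\ge0\}$. Tableau nodes. A node has the form $(\Gamma :: \mathrm{HCr},\mathrm{Nx},\mathrm{BD},\mathrm{BB} :: \mathrm{stat},\mathrm{uev})$, where: - $\Gamma$ is a finite set of formulae; - $\mathrm{HCr}$ is a finite list of pairs $(\varphi,\Delta)$ with $\varphi\in\Delta$, with length $\mathrm{len}$, $j$-th entry $\mathrm{HCr}[j]$, and concatenation $@$; - $\mathrm{Nx}$ is $\bot$ or a formula; - $\mathrm{BD},\mathrm{BB}$ are sets of formulae; - $\mathrm{stat}\in\{\mathbf{unsat},\mathbf{open},\mathbf{barred}\}$; - $\mathrm{uev}$ is a partial function from pairs ($\langle\rangle$-formula, $\langle{*}\rangle$-formula) to positive integers ($\bot$ = undefined). Auxiliary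 functions: - $\mathrm{uev}_\bot$ is everywhere undefined. - $\mathrm{tst}(\chi)=\chi$ if $\chi$ is a non-atomic diamond formula, else $\bot$. - $\mathrm{bl}(\chi,\Gamma)=\Gamma$ if $\chi$ is a non-atomic diamond formula, else $\emptyset$. - $\min_\bot(f,g)$ is undefined where either argument is undefined, else the pointwise minimum. Rules. The premise set is the displayed principal formula disjointly united with $\Gamma$. Unmentioned histories are copied to children; one-child rules copy the child's $\mathrm{stat}$ to the parent. Terminal rules: - (id): applicable if $\{p,\neg p\}\subseteq\Gamma$; set $\mathrm{stat}:=\mathbf{unsat}$ and $\mathrm{uev}:=\mathrm{uev}_\bot$. - ($\langle*\rangle_2$): premise $\langle\alpha^*\rangle\varphi,\Gamma$ with $\mathrm{Nx}\in\{\bot,\langle\alpha^*\rangle\varphi\}$ and $\langle\alpha^*\rangle\varphi\in\mathrm{BD}$; set $\mathrm{stat}:=\mathbf{barred}$ and $\mathrm{uev}:=\mathrm{uev}_\bot$. Linear rules with $\mathrm{Nx}=\bot$, in each of which $\mathrm{uev}(\chi_1,\chi_2)=\mathrm{uev}_1(\chi_1,\chi_2)$ if $\chi_1\in\Gamma$, else $\bot$: - ($\wedge$): $\varphi\wedge\psi,\Gamma$ has the child $\{\varphi,\psi\}\cup\Gamma$; - ($[\cup]$): $[\alpha\cup\beta]\varphi,\Gamma$ has the child $\{[\alpha]\varphi,[\beta]\varphi\}\cup\Gamma$; - ($[;]$): $[\alpha;\beta]\varphi,\Gamma$ has the child $\{[\alpha][\beta]\varphi\}\cup\Gamma$; - ($[*]$):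 $[\alpha^*]\varphi,\Gamma$ has a child with set $\Gamma$ if $[\alpha^*]\varphi\in\mathrm{BB}$ and $\{\varphi,[\alpha][\alpha^*]\varphi\}\cup\Gamma$ otherwise, and $\mathrm{BB}_1=\{[\alpha^*]\varphi\}\cup\mathrm{BB}$. Further linear rules: - ($\langle;\rangle$): premise $\langle\alpha;\beta\rangle\varphi,\Gamma$ with $\mathrm{Nx}\in\{\bot,\text{principal}\}$. The child is $\{\langle\alpha\rangle\langle\beta\rangle\varphi\}\cup\Gamma$ with $\mathrm{Nx}_1=\mathrm{tst}(\langle\alpha\rangle\langle\beta\rangle\varphi)$ and $\mathrm{BD}_1=\mathrm{bl}(\langle\alpha\rangle\langle\beta\rangle\varphi,\mathrm{BD})$. Set $\mathrm{uev}(\chi_1,\chi_2)$ to be $\mathrm{uev}_1(\langle\alpha\rangle\langle\beta\rangle\varphi,\chi_2)$ if $\chi_1$ is principal; $\mathrm{uev}_1(\chi_1,\chi_2)$ if $\chi_1\in\Gamma$; and $\bot$ otherwise. - ($\langle?\rangle$): premise $\langle\psi?\rangle\varphi,\Gamma$ with $\mathrm{Nx}\in\{\bot,\text{principal}\}$. The child is $\{\psi,\varphi\}\cup\Gamma$ with $\mathrm{Nx}_1=\mathrm{tst}(\varphi)$ and $\mathrm{BD}_1=\mathrm{bl}(\varphi,\mathrm{BD})$. Set $\mathrm{uev}(\chi_1,\chi_2)$ to be $\mathrm{uev}_1(\varphi,\chi_2)$ if $\chi_1$ is principal; $\mathrm{uev}_1(\chi_1,\chi_2)$ if $\chi_1\in\Gamma$;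 and $\bot$ otherwise. Branching rules ($i=1,2$): - ($\vee$): premise $\varphi_1\vee\varphi_2,\Gamma$ with $\mathrm{Nx}=\bot$; children $\{\varphi_i\}\cup\Gamma$. - ($[?]$): premise $[\psi?]\varphi,\Gamma$ with $\mathrm{Nx}=\bot$; children $\{{\sim}\psi\}\cup\Gamma$ and $\{\varphi\}\cup\Gamma$. - For both of these, $\mathrm{uev}'_i(\chi_1,\chi_2)=\mathrm{uev}_i(\chi_1,\chi_2)$ if $\chi_1\in\Gamma$, else $\bot$. - ($\langle\cup\rangle$): premise $\langle\alpha_1\cup\alpha_2\rangle\varphi,\Gamma$ with $\mathrm{Nx}\in\{\bot,\text{principal}\}$. The children are $\{\langle\alpha_i\rangle\varphi\}\cup\Gamma$ with $\mathrm{Nx}_i=\mathrm{tst}(\langle\alpha_i\rangle\varphi)$ and $\mathrm{BD}_i=\mathrm{bl}(\langle\alpha_i\rangle\varphi,\mathrm{BD})$. Set $\mathrm{uev}'_i(\chi_1,\chi_2)$ to be $\mathrm{uev}_i(\langle\alpha_i\rangle\varphi,\chi_2)$ if $\chi_1$ is principal; $\mathrm{uev}_i(\chi_1,\chi_2)$ if $\chi_1\in\Gamma$; and $\bot$ otherwise. - ($\langle*\rangle_1$): premise $\langle\alpha^*\rangle\varphi,\Gamma$ with $\mathrm{Nx}\in\{\bot,\langle\alpha^*\rangle\varphi\}$ and $\langle\alpha^*\rangle\varphi\notin\mathrm{BD}$. - Child 1 is $\{\varphi\}\cup\Gamma$ with $\mathrm{Nx}_1=\mathrm{tst}(\varphi)$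 and $\mathrm{BD}_1=\mathrm{bl}(\varphi,\{\langle\alpha^*\rangle\varphi\}\cup\mathrm{BD})$. - Child 2 is $\{\langle\alpha\rangle\langle\alpha^*\rangle\varphi\}\cup\Gamma$ with $\mathrm{Nx}_2=\mathrm{tst}(\langle\alpha\rangle\langle\alpha^*\rangle\varphi)$ and $\mathrm{BD}_2=\mathrm{bl}(\langle\alpha\rangle\langle\alpha^*\rangle\varphi,\{\langle\alpha^*\rangle\varphi\}\cup\mathrm{BD})$. - $\mathrm{uev}'_1(\chi_1,\chi_2)$ is $\bot$ if $\chi_1=\chi_2=\langle\alpha^*\rangle\varphi$; $\mathrm{uev}_1(\varphi,\chi_2)$ if $\chi_1=\langle\alpha^*\rangle\varphi\ne\chi_2$; $\mathrm{uev}_1(\chi_1,\chi_2)$ if $\chi_1\in\Gamma$; and $\bot$ otherwise. - $\mathrm{uev}'_2(\chi_1,\chi_2)$ is $\mathrm{uev}_2(\langle\alpha\rangle\langle\alpha^*\rangle\varphi,\chi_2)$ if $\chi_1=\langle\alpha^*\rangle\varphi$; $\mathrm{uev}_2(\chi_1,\chi_2)$ if $\chi_1\in\Gamma$; and $\bot$ otherwise. For all branching rules, the parent's variables are computed as follows. - $\mathrm{stat}=\mathbf{unsat}$ if both children are $\mathbf{unsat}$; $\mathbf{open}$ if some child is $\mathbf{open}$; and $\mathbf{barred}$ otherwise. - $\mathrm{uev}=\mathrm{uev}_\bot$ if $\mathrm{stat}\ne\mathbf{open}$. - Otherwise $\mathrm{uev}=\mathrm{uev}'_i$ if only child $i$ is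 open, and $\min_\bot(\mathrm{uev}'_1,\mathrm{uev}'_2)$ if both are open. Existential rule ($\langle\rangle$). The premise set is $\{\langle a_1\rangle\varphi_1,\dots,\langle a_{n+m}\rangle\varphi_{n+m}\}\uplus[-]\Delta\uplus\Gamma$, $n+m\ge0$, subject to the following conditions. - Each $a_i\in\mathrm{APrg}$. - $\Gamma$ consists of atoms and negated atoms only, with no $\{p,\neg p\}\subseteq\Gamma$. - $[-]\Delta$ consists only of formulae $[a]\psi$ with $a\in\mathrm{APrg}$. - Let $\Delta_i=\{\psi:[a_i]\psi\in[-]\Delta\}$. For $i\le n$, $(\varphi_i,\{\varphi_i\}\cup\Delta_i)$ is not an entry of $\mathrm{HCr}$. For $n<k\le n+m$, $(\varphi_k,\{\varphi_k\}\cup\Delta_k)=\mathrm{HCr}[j]$ for some $j$. The children, for $i\le n$, are $\{\varphi_i\}\cup\Delta_i$ with $\mathrm{HCr}_i=\mathrm{HCr}\,@\,[(\varphi_i,\{\varphi_i\}\cup\Delta_i)]$, $\mathrm{Nx}_i=\mathrm{tst}(\varphi_i)$ and $\mathrm{BD}_i=\mathrm{BB}_i=\emptyset$. The parent's variables are computed as follows. - $\mathrm{stat}=\mathbf{unsat}$ if some $i\le n$ has $\mathrm{stat}_i\ne\mathbf{open}$, or there exist $i\le n$ and a $\langle{*}\rangle$-formula $\psi$ with $\varphi_i\in\mathrm{ppre}(\psi)$ and $\mathrm{uev}_i(\varphi_i,\psi)$ defined and $>\mathrm{len}(\mathrm{HCr})$. Otherwise $\mathrm{stat}=\mathbf{open}$.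 - For $n<k\le n+m$, $\mathrm{uev}_k$ is constantly $j$, where $\mathrm{HCr}[j]=(\varphi_k,\{\varphi_k\}\cup\Delta_k)$. - $\mathrm{uev}(\chi_1,\chi_2)=\mathrm{uev}_i(\varphi_i,\chi_2)$ if $\mathrm{stat}=\mathbf{open}$, $\chi_2$ is a $\langle{*}\rangle$-formula, $\chi_1\in\mathrm{ppre}(\chi_2)$ and $\chi_1=\langle a_i\rangle\varphi_i$ for some $i\le n+m$. Otherwise $\mathrm{uev}(\chi_1,\chi_2)=\bot$. Tableau. A tableau is a tree of nodes whose children at each node arise from a single application of one applicable rule (free choice), with each parent's $\mathrm{stat}$ and $\mathrm{uev}$ computed from its children. It is expanded if no rule can be applied to any leaf. *)

theory Defs
  imports Main
begin

datatype fml =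
    Atom nat
  | Neg fml
  | And fml fml
  | Or fml fml
  | Dia prg fml
  | Box prg fml
and prg =
    AP nat
  | Test fml
  | Seq prg prg
  | Choice prg prg
  | Star prg

definition is_model :: "'w set \<Rightarrow> (nat \<Rightarrow> ('w \<times> 'w) set) \<Rightarrow> (nat \<Rightarrow> 'w set) \<Rightarrow> bool" where
  "is_model W R V \<longleftrightarrow> W \<noteq> {} \<and> (\<forall>a. R a \<subseteq> W \<times> W) \<and> (\<forall>p. V p \<subseteq> W)"

fun sat :: "'w set \<Rightarrow> (nat \<Rightarrow> ('w \<times> 'w) set) \<Rightarrow> (nat \<Rightarrow> 'w set) \<Rightarrow> 'w \<Rightarrow> fml \<Rightarrow> bool"
and rel :: "'w set \<Rightarrow> (nat \<Rightarrow> ('w \<times> 'w) set) \<Rightarrow> (nat \<Rightarrow> 'w set) \<Rightarrow> prg \<Rightarrow> ('w \<times> 'w) set"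
where
  "sat W R V w (Atom p) = (w \<in> V p)"
| "sat W R V w (Neg \<phi>) = (\<not> sat W R V w \<phi>)"
| "sat W R V w (And \<phi> \<psi>) = (sat W R V w \<phi> \<and> sat W R V w \<psi>)"
| "sat W R V w (Or \<phi> \<psi>) = (sat W R V w \<phi> \<or> sat W R V w \<psi>)"
| "sat W R V w (Dia \<alpha> \<phi>) = (\<exists>v. (w, v) \<in> rel W R V \<alpha> \<and> sat W R V v \<phi>)"
| "sat W R V w (Box \<alpha> \<phi>) = (\<forall>v. (w, v) \<in> rel W R V \<alpha> \<longrightarrow> sat W R V v \<phi>)"
| "rel W R V (AP a) = R a"
| "rel W R V (Test \<phi>) = {(w, w) | w. w \<in> W \<and> sat W R V w \<phi>}"
| "rel W R V (Seq \<alpha> \<beta>) = rel W R V \<alpha> O rel W R V \<beta>"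
| "rel W R V (Choice \<alpha> \<beta>) = rel W R V \<alpha> \<union> rel W R V \<beta>"
| "rel W R V (Star \<alpha>) = Id_on W \<union> (rel W R V \<alpha>)\<^sup>+"

text \<open>Satisfiability relative to models whose worlds have type 'w. Since a theorem with a
  free type variable holds for every type, quantifying the main theorem over 'w covers all
  models.\<close>

definition satisfiable :: "'w itself \<Rightarrow> fml \<Rightarrow> bool" where
  "satisfiable (_ :: 'w itself) \<phi> \<longleftrightarrow>
     (\<exists>(W :: 'w set) R V w. is_model W R V \<and> w \<in> W \<and> sat W R V w \<phi>)"

fun is_nnf :: "fml \<Rightarrow> bool" and is_nnf_prg :: "prg \<Rightarrow> bool" where
  "is_nnf (Atom p) = True"
| "is_nnf (Neg \<phi>) = (\<exists>p. \<phi> = Atom p)"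
| "is_nnf (And \<phi> \<psi>) = (is_nnf \<phi> \<and> is_nnf \<psi>)"
| "is_nnf (Or \<phi> \<psi>) = (is_nnf \<phi> \<and> is_nnf \<psi>)"
| "is_nnf (Dia \<alpha> \<phi>) = (is_nnf_prg \<alpha> \<and> is_nnf \<phi>)"
| "is_nnf (Box \<alpha> \<phi>) = (is_nnf_prg \<alpha> \<and> is_nnf \<phi>)"
| "is_nnf_prg (AP a) = True"
| "is_nnf_prg (Test \<phi>) = is_nnf \<phi>"
| "is_nnf_prg (Seq \<alpha> \<beta>) = (is_nnf_prg \<alpha> \<and> is_nnf_prg \<beta>)"
| "is_nnf_prg (Choice \<alpha> \<beta>) = (is_nnf_prg \<alpha> \<and> is_nnf_prg \<beta>)"
| "is_nnf_prg (Star \<alpha>) = is_nnf_prg \<alpha>"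

fun nnf :: "fml \<Rightarrow> fml" and nnf_neg :: "fml \<Rightarrow> fml" and nnf_prg :: "prg \<Rightarrow> prg" where
  "nnf (Atom p) = Atom p"
| "nnf (Neg \<phi>) = nnf_neg \<phi>"
| "nnf (And \<phi> \<psi>) = And (nnf \<phi>) (nnf \<psi>)"
| "nnf (Or \<phi> \<psi>) = Or (nnf \<phi>) (nnf \<psi>)"
| "nnf (Dia \<alpha> \<phi>) = Dia (nnf_prg \<alpha>) (nnf \<phi>)"
| "nnf (Box \<alpha> \<phi>) = Box (nnf_prg \<alpha>) (nnf \<phi>)"
| "nnf_neg (Atom p) = Neg (Atom p)"
| "nnf_neg (Neg \<phi>) = nnf \<phi>"
| "nnf_neg (And \<phi> \<psi>) = Or (nnf_neg \<phi>) (nnf_neg \<psi>)"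
| "nnf_neg (Or \<phi> \<psi>) = And (nnf_neg \<phi>) (nnf_neg \<psi>)"
| "nnf_neg (Dia \<alpha> \<phi>) = Box (nnf_prg \<alpha>) (nnf_neg \<phi>)"
| "nnf_neg (Box \<alpha> \<phi>) = Dia (nnf_prg \<alpha>) (nnf_neg \<phi>)"
| "nnf_prg (AP a) = AP a"
| "nnf_prg (Test \<phi>) = Test (nnf \<phi>)"
| "nnf_prg (Seq \<alpha> \<beta>) = Seq (nnf_prg \<alpha>) (nnf_prg \<beta>)"
| "nnf_prg (Choice \<alpha> \<beta>) = Choice (nnf_prg \<alpha>) (nnf_prg \<beta>)"
| "nnf_prg (Star \<alpha>) = Star (nnf_prg \<alpha>)"

definition neg_nnf :: "fml \<Rightarrow> fml" where
  "neg_nnf \<phi> = nnf (Neg \<phi>)"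

text \<open>ppre(\<psi>) = {<\<alpha>1>...<\<alpha>k>\<psi> : k \<ge> 0}; in_ppre \<chi> \<psi> means \<chi> \<in> ppre(\<psi>).\<close>

fun in_ppre :: "fml \<Rightarrow> fml \<Rightarrow> bool" where
  "in_ppre (Dia \<alpha> \<chi>) \<psi> = (Dia \<alpha> \<chi> = \<psi> \<or> in_ppre \<chi> \<psi>)"
| "in_ppre \<chi> \<psi> = (\<chi> = \<psi>)"

definition is_star_dia :: "fml \<Rightarrow> bool" where
  "is_star_dia \<chi> \<longleftrightarrow> (\<exists>\<alpha> \<phi>. \<chi> = Dia (Star \<alpha>) \<phi>)"

definition nonatomic_dia :: "fml \<Rightarrow> bool" where
  "nonatomic_dia \<chi> \<longleftrightarrow> (\<exists>\<alpha> \<phi>. \<chi> = Dia \<alpha> \<phi> \<and> (\<forall>a. \<alpha> \<noteq> AP a))"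

definition is_lit :: "fml \<Rightarrow> bool" where
  "is_lit \<chi> \<longleftrightarrow> (\<exists>p. \<chi> = Atom p \<or> \<chi> = Neg (Atom p))"

definition is_atdia :: "fml \<Rightarrow> bool" where
  "is_atdia \<chi> \<longleftrightarrow> (\<exists>a \<phi>. \<chi> = Dia (AP a) \<phi>)"

definition is_atbox :: "fml \<Rightarrow> bool" where
  "is_atbox \<chi> \<longleftrightarrow> (\<exists>a \<phi>. \<chi> = Box (AP a) \<phi>)"

definition tst :: "fml \<Rightarrow> fml option" where
  "tst \<chi> = (if nonatomic_dia \<chi> then Some \<chi> else None)"

definition bl :: "fml \<Rightarrow> fml set \<Rightarrow> fml set" where
  "bl \<chi> G = (if nonatomic_dia \<chi> then G else {})"

datatype status = Unsat | Open | Barred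

text \<open>Partial functions (\<langle>\<rangle>-formula, \<langle>*\<rangle>-formula) \<rightharpoonup> positive integers, curried;
  None is \<bottom>.\<close>
type_synonym uevf = "fml \<Rightarrow> fml \<Rightarrow> nat option"

definition uev_bot :: uevf where
  "uev_bot = (\<lambda>_ _. None)"

definition min_bot :: "uevf \<Rightarrow> uevf \<Rightarrow> uevf" where
  "min_bot f g = (\<lambda>x y. case (f x y, g x y) of (Some m, Some n) \<Rightarrow> Some (min m n) | _ \<Rightarrow> None)"

definition restr :: "fml set \<Rightarrow> uevf \<Rightarrow> uevf" where
  "restr G u = (\<lambda>c1 c2. if c1 \<in> G then u c1 c2 else None)"

definition restr_pr :: "fml \<Rightarrow> fml \<Rightarrow> fml set \<Rightarrow> uevf \<Rightarrow> uevf" where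
  "restr_pr \<chi> \<chi>' G u = (\<lambda>c1 c2. if c1 = \<chi> then u \<chi>' c2 else if c1 \<in> G then u c1 c2 else None)"

definition branch_stat :: "status \<Rightarrow> status \<Rightarrow> status" where
  "branch_stat s1 s2 =
     (if s1 = Unsat \<and> s2 = Unsat then Unsat
      else if s1 = Open \<or> s2 = Open then Open else Barred)"

definition branch_uev :: "status \<Rightarrow> status \<Rightarrow> uevf \<Rightarrow> uevf \<Rightarrow> uevf" where
  "branch_uev s1 s2 u1 u2 =
     (if s1 = Open \<and> s2 = Open then min_bot u1 u2
      else if s1 = Open then u1
      else if s2 = Open then u2
      else uev_bot)"

text \<open>The input part of a node: (\<Gamma> :: HCr, Nx, BD, BB); stat and uev are computed.\<close>
record node =
  gam :: "fml set"
  hcr :: "(fml \<times> fml set) list"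
  nx  :: "fml option"
  bd  :: "fml set"
  bb  :: "fml set"

definition Delta :: "fml set \<Rightarrow> nat \<Rightarrow> fml set" where
  "Delta S a = {\<psi>. Box (AP a) \<psi> \<in> S}"

text \<open>For the existential rule, the diamond <a>\<phi> of the premise is "new" (index i \<le> n)
  iff its pair is not an entry of HCr.\<close>
definition ex_pair :: "node \<Rightarrow> nat \<Rightarrow> fml \<Rightarrow> fml \<times> fml set" where
  "ex_pair N a \<phi> = (\<phi>, insert \<phi> (Delta (gam N) a))"

definition ex_new :: "node \<Rightarrow> nat \<Rightarrow> fml \<Rightarrow> bool" where
  "ex_new N a \<phi> \<longleftrightarrow> Dia (AP a) \<phi> \<in> gam N \<and> ex_pair N a \<phi> \<notin> set (hcr N)"

definition ex_child :: "node \<Rightarrow> nat \<Rightarrow> fml \<Rightarrow> node" where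
  "ex_child N a \<phi> =
     \<lparr>gam = insert \<phi> (Delta (gam N) a), hcr = hcr N @ [ex_pair N a \<phi>],
      nx = tst \<phi>, bd = {}, bb = {}\<rparr>"

text \<open>1-based index j with HCr[j] = the pair (HCr has no repetitions in tableaux).\<close>
definition hcr_index :: "(fml \<times> fml set) list \<Rightarrow> fml \<times> fml set \<Rightarrow> nat" where
  "hcr_index H x = (LEAST j. 1 \<le> j \<and> j \<le> length H \<and> H ! (j - 1) = x)"

definition ex_stat :: "node \<Rightarrow> (nat \<Rightarrow> fml \<Rightarrow> status) \<Rightarrow> (nat \<Rightarrow> fml \<Rightarrow> uevf) \<Rightarrow> status" where
  "ex_stat N st ue =
     (if \<exists>a \<phi>. ex_new N a \<phi> \<and>
              (st a \<phi> \<noteq> Open \<or>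
               (\<exists>\<psi> k. is_star_dia \<psi> \<and> in_ppre \<phi> \<psi> \<and> ue a \<phi> \<phi> \<psi> = Some k \<and> k > length (hcr N)))
      then Unsat else Open)"

definition ex_uev :: "node \<Rightarrow> (nat \<Rightarrow> fml \<Rightarrow> status) \<Rightarrow> (nat \<Rightarrow> fml \<Rightarrow> uevf) \<Rightarrow> uevf" where
  "ex_uev N st ue = (\<lambda>c1 c2.
     if ex_stat N st ue = Open \<and> is_star_dia c2 \<and> in_ppre c1 c2 \<and> c1 \<in> gam N then
       (case c1 of
          Dia (AP a) \<phi> \<Rightarrow>
            (if ex_new N a \<phi> then ue a \<phi> \<phi> c2
             else Some (hcr_index (hcr N) (ex_pair N a \<phi>)))
        | _ \<Rightarrow> None)
     else None)"

text \<open>tab N s u: there is a (finite) expanded tableau with root node input N whose root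
  gets stat s and uev u, computed bottom-up by the rules. Each clause is one rule
  application at the root; the principal formula \<chi> is in gam N and \<Gamma> = gam N - {\<chi>}.\<close>

inductive tab :: "node \<Rightarrow> status \<Rightarrow> uevf \<Rightarrow> bool" where
  r_id:
    "\<lbrakk> Atom p \<in> gam N; Neg (Atom p) \<in> gam N \<rbrakk> \<Longrightarrow> tab N Unsat uev_bot"
| r_star2:
    "\<lbrakk> Dia (Star \<alpha>) \<phi> \<in> gam N; nx N \<in> {None, Some (Dia (Star \<alpha>) \<phi>)};
       Dia (Star \<alpha>) \<phi> \<in> bd N \<rbrakk> \<Longrightarrow> tab N Barred uev_bot"
| r_and:
    "\<lbrakk> And \<phi> \<psi> \<in> gam N; nx N = None;
       tab (N\<lparr>gam := {\<phi>, \<psi>} \<union> (gam N - {And \<phi> \<psi>})\<rparr>) s u \<rbrakk>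
     \<Longrightarrow> tab N s (restr (gam N - {And \<phi> \<psi>}) u)"
| r_box_union:
    "\<lbrakk> Box (Choice \<alpha> \<beta>) \<phi> \<in> gam N; nx N = None;
       tab (N\<lparr>gam := {Box \<alpha> \<phi>, Box \<beta> \<phi>} \<union> (gam N - {Box (Choice \<alpha> \<beta>) \<phi>})\<rparr>) s u \<rbrakk>
     \<Longrightarrow> tab N s (restr (gam N - {Box (Choice \<alpha> \<beta>) \<phi>}) u)"
| r_box_seq:
    "\<lbrakk> Box (Seq \<alpha> \<beta>) \<phi> \<in> gam N; nx N = None;
       tab (N\<lparr>gam := insert (Box \<alpha> (Box \<beta> \<phi>)) (gam N - {Box (Seq \<alpha> \<beta>) \<phi>})\<rparr>) s u \<rbrakk>
     \<Longrightarrow> tab N s (restr (gam N - {Box (Seq \<alpha> \<beta>) \<phi>}) u)"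
| r_box_star:
    "\<lbrakk> Box (Star \<alpha>) \<phi> \<in> gam N; nx N = None;
       tab (N\<lparr>gam := (if Box (Star \<alpha>) \<phi> \<in> bb N then gam N - {Box (Star \<alpha>) \<phi>}
                      else {\<phi>, Box \<alpha> (Box (Star \<alpha>) \<phi>)} \<union> (gam N - {Box (Star \<alpha>) \<phi>})),
              bb := insert (Box (Star \<alpha>) \<phi>) (bb N)\<rparr>) s u \<rbrakk>
     \<Longrightarrow> tab N s (restr (gam N - {Box (Star \<alpha>) \<phi>}) u)"
| r_dia_seq:
    "\<lbrakk> Dia (Seq \<alpha> \<beta>) \<phi> \<in> gam N; nx N \<in> {None, Some (Dia (Seq \<alpha> \<beta>) \<phi>)};
       tab (N\<lparr>gam := insert (Dia \<alpha> (Dia \<beta> \<phi>)) (gam N - {Dia (Seq \<alpha> \<beta>) \<phi>}),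
              nx := tst (Dia \<alpha> (Dia \<beta> \<phi>)), bd := bl (Dia \<alpha> (Dia \<beta> \<phi>)) (bd N)\<rparr>) s u \<rbrakk>
     \<Longrightarrow> tab N s (restr_pr (Dia (Seq \<alpha> \<beta>) \<phi>) (Dia \<alpha> (Dia \<beta> \<phi>)) (gam N - {Dia (Seq \<alpha> \<beta>) \<phi>}) u)"
| r_dia_test:
    "\<lbrakk> Dia (Test \<psi>) \<phi> \<in> gam N; nx N \<in> {None, Some (Dia (Test \<psi>) \<phi>)};
       tab (N\<lparr>gam := {\<psi>, \<phi>} \<union> (gam N - {Dia (Test \<psi>) \<phi>}),
              nx := tst \<phi>, bd := bl \<phi> (bd N)\<rparr>) s u \<rbrakk>
     \<Longrightarrow> tab N s (restr_pr (Dia (Test \<psi>) \<phi>) \<phi> (gam N - {Dia (Test \<psi>) \<phi>}) u)"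
| r_or:
    "\<lbrakk> Or \<phi>1 \<phi>2 \<in> gam N; nx N = None;
       tab (N\<lparr>gam := insert \<phi>1 (gam N - {Or \<phi>1 \<phi>2})\<rparr>) s1 u1;
       tab (N\<lparr>gam := insert \<phi>2 (gam N - {Or \<phi>1 \<phi>2})\<rparr>) s2 u2 \<rbrakk>
     \<Longrightarrow> tab N (branch_stat s1 s2)
           (branch_uev s1 s2 (restr (gam N - {Or \<phi>1 \<phi>2}) u1) (restr (gam N - {Or \<phi>1 \<phi>2}) u2))"
| r_box_test:
    "\<lbrakk> Box (Test \<psi>) \<phi> \<in> gam N; nx N = None;
       tab (N\<lparr>gam := insert (neg_nnf \<psi>) (gam N - {Box (Test \<psi>) \<phi>})\<rparr>) s1 u1;
       tab (N\<lparr>gam := insert \<phi> (gam N - {Box (Test \<psi>) \<phi>})\<rparr>) s2 u2 \<rbrakk>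
     \<Longrightarrow> tab N (branch_stat s1 s2)
           (branch_uev s1 s2 (restr (gam N - {Box (Test \<psi>) \<phi>}) u1)
                             (restr (gam N - {Box (Test \<psi>) \<phi>}) u2))"
| r_dia_union:
    "\<lbrakk> Dia (Choice \<alpha>1 \<alpha>2) \<phi> \<in> gam N; nx N \<in> {None, Some (Dia (Choice \<alpha>1 \<alpha>2) \<phi>)};
       tab (N\<lparr>gam := insert (Dia \<alpha>1 \<phi>) (gam N - {Dia (Choice \<alpha>1 \<alpha>2) \<phi>}),
              nx := tst (Dia \<alpha>1 \<phi>), bd := bl (Dia \<alpha>1 \<phi>) (bd N)\<rparr>) s1 u1;
       tab (N\<lparr>gam := insert (Dia \<alpha>2 \<phi>) (gam N - {Dia (Choice \<alpha>1 \<alpha>2) \<phi>}),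
              nx := tst (Dia \<alpha>2 \<phi>), bd := bl (Dia \<alpha>2 \<phi>) (bd N)\<rparr>) s2 u2 \<rbrakk>
     \<Longrightarrow> tab N (branch_stat s1 s2)
           (branch_uev s1 s2
              (restr_pr (Dia (Choice \<alpha>1 \<alpha>2) \<phi>) (Dia \<alpha>1 \<phi>) (gam N - {Dia (Choice \<alpha>1 \<alpha>2) \<phi>}) u1)
              (restr_pr (Dia (Choice \<alpha>1 \<alpha>2) \<phi>) (Dia \<alpha>2 \<phi>) (gam N - {Dia (Choice \<alpha>1 \<alpha>2) \<phi>}) u2))"
| r_star1:
    "\<lbrakk> Dia (Star \<alpha>) \<phi> \<in> gam N; nx N \<in> {None, Some (Dia (Star \<alpha>) \<phi>)};
       Dia (Star \<alpha>) \<phi> \<notin> bd N;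
       tab (N\<lparr>gam := insert \<phi> (gam N - {Dia (Star \<alpha>) \<phi>}),
              nx := tst \<phi>, bd := bl \<phi> (insert (Dia (Star \<alpha>) \<phi>) (bd N))\<rparr>) s1 u1;
       tab (N\<lparr>gam := insert (Dia \<alpha> (Dia (Star \<alpha>) \<phi>)) (gam N - {Dia (Star \<alpha>) \<phi>}),
              nx := tst (Dia \<alpha> (Dia (Star \<alpha>) \<phi>)),
              bd := bl (Dia \<alpha> (Dia (Star \<alpha>) \<phi>)) (insert (Dia (Star \<alpha>) \<phi>) (bd N))\<rparr>) s2 u2 \<rbrakk>
     \<Longrightarrow> tab N (branch_stat s1 s2)
           (branch_uev s1 s2
              (\<lambda>c1 c2. if c1 = Dia (Star \<alpha>) \<phi> then
                          (if c2 = Dia (Star \<alpha>) \<phi> then None else u1 \<phi> c2)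
                        else if c1 \<in> gam N - {Dia (Star \<alpha>) \<phi>} then u1 c1 c2 else None)
              (restr_pr (Dia (Star \<alpha>) \<phi>) (Dia \<alpha> (Dia (Star \<alpha>) \<phi>)) (gam N - {Dia (Star \<alpha>) \<phi>}) u2))"
| r_ex:
    "\<lbrakk> \<forall>\<chi>\<in>gam N. is_atdia \<chi> \<or> is_atbox \<chi> \<or> is_lit \<chi>;
       \<not> (\<exists>p. Atom p \<in> gam N \<and> Neg (Atom p) \<in> gam N);
       \<forall>a \<phi>. ex_new N a \<phi> \<longrightarrow> tab (ex_child N a \<phi>) (st a \<phi>) (ue a \<phi>) \<rbrakk>
     \<Longrightarrow> tab N (ex_stat N st ue) (ex_uev N st ue)"

definition root_node :: "fml \<Rightarrow> node" where
  "root_node \<phi> = \<lparr>gam = {\<phi>}, hcr = [], nx = None, bd = {}, bb = {}\<rparr>"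

end

(*
  Soundness, by induction over the tableau: every node whose formulas all hold at some world
  of a model (and whose blocking set is consistent with that world, see barrier_ok) is open.
  Diamonds are measured by a minimal derivation fulfilling them, ranked lexicographically by
  its number of atomic program steps and its number of local decomposition steps. Each local
  diamond rule strictly lowers the rank of the formula in focus, so a blocked formula, whose
  rank is larger, never returns to focus and the barred rule cannot fire. A uev value k is
  always witnessed by a history entry at position >= k that is fulfilled in strictly fewer
  atomic steps; at the existential rule the new entry cannot be that witness, which bounds k
  by the length of the history and rules out the loop check.
*)

theory Submission
  imports Defs "HOL-Library.Product_Lexorder"
begin

lemma rel_subset_worlds: "is_model W R V \<Longrightarrow> rel W R V \<alpha> \<subseteq> W \<times> W"
proof (induction \<alpha>)
  case (AP a)
  then show ?case by (auto simp: is_model_def)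
next
  case (Star \<alpha>)
  then show ?case by (auto dest: trancl_subset_Sigma)
qed auto

lemma sat_nnf:
  "(\<forall>w. sat W R V w (nnf \<chi>) = sat W R V w \<chi>) \<and>
   (\<forall>w. sat W R V w (nnf_neg \<chi>) = (\<not> sat W R V w \<chi>))"
  "rel W R V (nnf_prg \<alpha>) = rel W R V \<alpha>"
  by (induction \<chi> and \<alpha>) auto

lemma sat_neg_nnf: "sat W R V w (neg_nnf \<psi>) \<longleftrightarrow> \<not> sat W R V w \<psi>"
  by (simp add: neg_nnf_def sat_nnf(1))

lemma sat_Box_Star_unfold:
  assumes "sat W R V w (Box (Star \<alpha>) \<phi>)" "w \<in> W"
  shows "sat W R V w \<phi> \<and> sat W R V w (Box \<alpha> (Box (Star \<alpha>) \<phi>))"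
  using assms by (auto intro: trancl_into_trancl2)

lemma hcr_index_nth:
  assumes "x \<in> set H"
  shows "1 \<le> hcr_index H x \<and> hcr_index H x \<le> length H \<and> H ! (hcr_index H x - 1) = x"
proof -
  obtain i where "i < length H" "H ! i = x"
    using assms by (auto simp: in_set_conv_nth)
  then have "1 \<le> Suc i \<and> Suc i \<le> length H \<and> H ! (Suc i - 1) = x" by simp
  then show ?thesis unfolding hcr_index_def by (rule LeastI)
qed

locale pdl_model =
  fixes W :: "'w set" and R :: "nat \<Rightarrow> ('w \<times> 'w) set" and V :: "nat \<Rightarrow> 'w set"
  assumes model: "is_model W R V"
begin

abbreviation holds :: "'w \<Rightarrow> fml \<Rightarrow> bool" where
  "holds w \<chi> \<equiv> sat W R V w \<chi>"

abbreviation acc :: "prg \<Rightarrow> ('w \<times> 'w) set" where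
  "acc \<alpha> \<equiv> rel W R V \<alpha>"

text \<open>\<open>fulfils w \<chi> m d\<close>: a derivation showing that \<open>\<chi>\<close> holds at \<open>w\<close>, following exactly the
  diamond rules of the tableau; \<open>m\<close> counts the atomic program steps, \<open>d\<close> the decomposition
  steps taken at \<open>w\<close> before the first atomic step.\<close>

inductive fulfils :: "'w \<Rightarrow> fml \<Rightarrow> nat \<Rightarrow> nat \<Rightarrow> bool" where
  fulfils_base: "(\<forall>\<alpha> \<phi>. \<chi> \<noteq> Dia \<alpha> \<phi>) \<Longrightarrow> holds w \<chi> \<Longrightarrow> fulfils w \<chi> 0 0"
| fulfils_AP: "(w, v) \<in> R a \<Longrightarrow> fulfils v \<phi> m d \<Longrightarrow> fulfils w (Dia (AP a) \<phi>) (Suc m) 0"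
| fulfils_Seq: "fulfils w (Dia \<alpha> (Dia \<beta> \<phi>)) m d \<Longrightarrow> fulfils w (Dia (Seq \<alpha> \<beta>) \<phi>) m (Suc d)"
| fulfils_Test: "w \<in> W \<Longrightarrow> holds w \<psi> \<Longrightarrow> fulfils w \<phi> m d \<Longrightarrow> fulfils w (Dia (Test \<psi>) \<phi>) m (Suc d)"
| fulfils_Choice1: "fulfils w (Dia \<alpha> \<phi>) m d \<Longrightarrow> fulfils w (Dia (Choice \<alpha> \<beta>) \<phi>) m (Suc d)"
| fulfils_Choice2: "fulfils w (Dia \<beta> \<phi>) m d \<Longrightarrow> fulfils w (Dia (Choice \<alpha> \<beta>) \<phi>) m (Suc d)"
| fulfils_Star0: "w \<in> W \<Longrightarrow> fulfils w \<phi> m d \<Longrightarrow> fulfils w (Dia (Star \<alpha>) \<phi>) m (Suc d)"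
| fulfils_Star1: "fulfils w (Dia \<alpha> (Dia (Star \<alpha>) \<phi>)) m d \<Longrightarrow> fulfils w (Dia (Star \<alpha>) \<phi>) m (Suc d)"

lemma fulfils_holds: "fulfils w \<chi> m d \<Longrightarrow> holds w \<chi>"
proof (induction rule: fulfils.induct)
  case (fulfils_Star1 w \<alpha> \<phi> m d)
  then obtain u v where "(w, u) \<in> acc \<alpha>" "(u, v) \<in> Id_on W \<union> (acc \<alpha>)\<^sup>+" "holds v \<phi>"
    by auto
  then show ?case by (auto intro: trancl_into_trancl2)
qed auto

lemma fulfils_Dia:
  "(w, v) \<in> acc \<alpha> \<Longrightarrow> fulfils v \<psi> m d \<Longrightarrow> \<exists>m' d'. fulfils w (Dia \<alpha> \<psi>) m' d'"
proof (induction \<alpha> arbitrary: w v \<psi> m d rule: prg.induct[of "\<lambda>_. True"])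
  case (AP a)
  then show ?case by (auto intro: fulfils_AP)
next
  case (Test \<phi>)
  then show ?case by (auto intro: fulfils_Test)
next
  case (Seq \<alpha> \<beta>)
  then obtain u where "(w, u) \<in> acc \<alpha>" "(u, v) \<in> acc \<beta>" by auto
  moreover obtain m1 d1 where "fulfils u (Dia \<beta> \<psi>) m1 d1"
    using Seq.IH(2) \<open>(u, v) \<in> acc \<beta>\<close> Seq.prems(2) by blast
  ultimately obtain m' d' where "fulfils w (Dia \<alpha> (Dia \<beta> \<psi>)) m' d'"
    using Seq.IH(1) by blast
  then show ?case by (blast intro: fulfils_Seq)
next
  case (Choice \<alpha> \<beta>)
  from Choice.prems(1) have "(w, v) \<in> acc \<alpha> \<or> (w, v) \<in> acc \<beta>" by simp
  then show ?case using Choice.IH Choice.prems(2) by (meson fulfils_Choice1 fulfils_Choice2)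
next
  case (Star \<alpha>)
  have "\<exists>m' d'. fulfils u (Dia (Star \<alpha>) \<psi>) m' d'" if "(u, v) \<in> (acc \<alpha>)\<^sup>+" for u
    using that
  proof (induction rule: converse_trancl_induct)
    case (base u)
    then have "v \<in> W" using rel_subset_worlds[OF model] by blast
    then have "fulfils v (Dia (Star \<alpha>) \<psi>) m (Suc d)" by (rule fulfils_Star0[OF _ Star.prems(2)])
    with Star.IH base show ?case by (meson fulfils_Star1)
  next
    case (step u u')
    with Star.IH show ?case by (meson fulfils_Star1)
  qed
  moreover have "fulfils w (Dia (Star \<alpha>) \<psi>) m (Suc d)" if "(w, v) \<in> Id_on W"
    using that Star.prems(2) by (auto intro: fulfils_Star0)
  ultimately show ?case using Star.prems(1) by auto
qed simp_all

lemma fulfils_non_Dia: "(\<forall>\<alpha> \<phi>. \<chi> \<noteq> Dia \<alpha> \<phi>) \<Longrightarrow> holds w \<chi> \<Longrightarrow> \<exists>m d. fulfils w \<chi> m d"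
  using fulfils_base by blast

lemma holds_fulfils: "w \<in> W \<Longrightarrow> holds w \<chi> \<Longrightarrow> \<exists>m d. fulfils w \<chi> m d"
proof (induction \<chi> arbitrary: w rule: fml.induct[of _ "\<lambda>_. True"])
  case (Dia \<alpha> \<phi>)
  then obtain v where "(w, v) \<in> acc \<alpha>" "holds v \<phi>" by auto
  with Dia.IH rel_subset_worlds[OF model] show ?case by (meson fulfils_Dia mem_Sigma_iff subsetD)
qed (auto intro: fulfils_non_Dia)

definition mdepth :: "'w \<Rightarrow> fml \<Rightarrow> nat" where
  "mdepth w \<chi> = (LEAST m. \<exists>d. fulfils w \<chi> m d)"

definition ldepth :: "'w \<Rightarrow> fml \<Rightarrow> nat" where
  "ldepth w \<chi> = (LEAST d. fulfils w \<chi> (mdepth w \<chi>) d)"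

definition rank :: "'w \<Rightarrow> fml \<Rightarrow> nat \<times> nat" where
  "rank w \<chi> = (mdepth w \<chi>, ldepth w \<chi>)"

lemma fulfils_minimal:
  assumes "fulfils w \<chi> m d"
  shows "fulfils w \<chi> (mdepth w \<chi>) (ldepth w \<chi>) \<and> mdepth w \<chi> \<le> m"
proof -
  have "\<exists>d. fulfils w \<chi> (mdepth w \<chi>) d"
    unfolding mdepth_def by (rule LeastI_ex) (use assms in blast)
  then have "fulfils w \<chi> (mdepth w \<chi>) (ldepth w \<chi>)"
    unfolding ldepth_def by (rule LeastI_ex)
  moreover have "mdepth w \<chi> \<le> m"
    unfolding mdepth_def using assms by (blast intro: Least_le)
  ultimately show ?thesis ..
qed

lemma holds_fulfils_minimal: "w \<in> W \<Longrightarrow> holds w \<chi> \<Longrightarrow> fulfils w \<chi> (mdepth w \<chi>) (ldepth w \<chi>)"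
  using holds_fulfils fulfils_minimal by blast

text \<open>\<open>\<chi>'\<close> is what a local diamond rule makes of \<open>\<chi>\<close> when it follows a minimal fulfilling
  derivation of \<open>\<chi>\<close> at \<open>w\<close>.\<close>

definition local_reduct :: "'w \<Rightarrow> fml \<Rightarrow> fml \<Rightarrow> bool" where
  "local_reduct w \<chi> \<chi>' \<longleftrightarrow> holds w \<chi>' \<and> mdepth w \<chi>' \<le> mdepth w \<chi> \<and> rank w \<chi>' < rank w \<chi>"

lemma fulfils_local_reduct:
  assumes "fulfils w \<chi>' (mdepth w \<chi>) d" "ldepth w \<chi> = Suc d"
  shows "local_reduct w \<chi> \<chi>'"
proof -
  have "mdepth w \<chi>' \<le> mdepth w \<chi>" using fulfils_minimal[OF assms(1)] by blast
  moreover have "ldepth w \<chi>' \<le> d" if "mdepth w \<chi>' = mdepth w \<chi>"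
    unfolding ldepth_def by (rule Least_le) (simp add: assms(1) that)
  ultimately have "rank w \<chi>' < rank w \<chi>"
    using assms(2) unfolding rank_def by (cases "mdepth w \<chi>' = mdepth w \<chi>") auto
  with \<open>mdepth w \<chi>' \<le> mdepth w \<chi>\<close> show ?thesis
    using fulfils_holds[OF assms(1)] unfolding local_reduct_def by blast
qed

lemma local_reduct_Seq:
  assumes "w \<in> W" "holds w (Dia (Seq \<alpha> \<beta>) \<phi>)"
  shows "local_reduct w (Dia (Seq \<alpha> \<beta>) \<phi>) (Dia \<alpha> (Dia \<beta> \<phi>))"
proof -
  let ?p = "Dia (Seq \<alpha> \<beta>) \<phi>"
  from holds_fulfils_minimal[OF assms] obtain d
    where "fulfils w (Dia \<alpha> (Dia \<beta> \<phi>)) (mdepth w ?p) d" "ldepth w ?p = Suc d"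
    by (cases rule: fulfils.cases) auto
  then show ?thesis by (rule fulfils_local_reduct)
qed

lemma local_reduct_Test:
  assumes "w \<in> W" "holds w (Dia (Test \<psi>) \<phi>)"
  shows "holds w \<psi> \<and> local_reduct w (Dia (Test \<psi>) \<phi>) \<phi>"
proof -
  let ?p = "Dia (Test \<psi>) \<phi>"
  from holds_fulfils_minimal[OF assms] obtain d
    where "holds w \<psi>" "fulfils w \<phi> (mdepth w ?p) d" "ldepth w ?p = Suc d"
    by (cases rule: fulfils.cases) auto
  then show ?thesis using fulfils_local_reduct by blast
qed

lemma local_reduct_Choice:
  assumes "w \<in> W" "holds w (Dia (Choice \<alpha> \<beta>) \<phi>)"
  shows "local_reduct w (Dia (Choice \<alpha> \<beta>) \<phi>) (Dia \<alpha> \<phi>) \<or>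
         local_reduct w (Dia (Choice \<alpha> \<beta>) \<phi>) (Dia \<beta> \<phi>)"
proof -
  let ?p = "Dia (Choice \<alpha> \<beta>) \<phi>"
  from holds_fulfils_minimal[OF assms] obtain d
    where "fulfils w (Dia \<alpha> \<phi>) (mdepth w ?p) d \<or> fulfils w (Dia \<beta> \<phi>) (mdepth w ?p) d"
      and "ldepth w ?p = Suc d"
    by (cases rule: fulfils.cases) auto
  then show ?thesis using fulfils_local_reduct by blast
qed

lemma local_reduct_Star:
  assumes "w \<in> W" "holds w (Dia (Star \<alpha>) \<phi>)"
  shows "local_reduct w (Dia (Star \<alpha>) \<phi>) \<phi> \<or>
         local_reduct w (Dia (Star \<alpha>) \<phi>) (Dia \<alpha> (Dia (Star \<alpha>) \<phi>))"
proof -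
  let ?p = "Dia (Star \<alpha>) \<phi>"
  from holds_fulfils_minimal[OF assms] obtain d
    where "fulfils w \<phi> (mdepth w ?p) d \<or> fulfils w (Dia \<alpha> ?p) (mdepth w ?p) d"
      and "ldepth w ?p = Suc d"
    by (cases rule: fulfils.cases) auto
  then show ?thesis using fulfils_local_reduct by blast
qed

definition pair_mdepth :: "fml \<times> fml set \<Rightarrow> nat" where
  "pair_mdepth e = (LEAST n. \<exists>v\<in>W. (\<forall>\<chi>\<in>snd e. holds v \<chi>) \<and> mdepth v (fst e) \<le> n)"

text \<open>The invariant behind a uev value \<open>k\<close> for \<open>\<chi>\<close> at \<open>w\<close>. History positions are 1-based,
  as in \<open>hcr_index\<close>.\<close>

definition history_below :: "(fml \<times> fml set) list \<Rightarrow> 'w \<Rightarrow> fml \<Rightarrow> nat \<Rightarrow> bool" where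
  "history_below H w \<chi> k \<longleftrightarrow>
     (\<exists>j. k \<le> j \<and> 1 \<le> j \<and> j \<le> length H \<and> pair_mdepth (H ! (j - 1)) < mdepth w \<chi>)"

definition uev_sound :: "(fml \<times> fml set) list \<Rightarrow> 'w \<Rightarrow> uevf \<Rightarrow> bool" where
  "uev_sound H w u \<longleftrightarrow> (\<forall>\<chi>1 \<chi>2 k. u \<chi>1 \<chi>2 = Some k \<longrightarrow> history_below H w \<chi>1 k)"

definition barrier_ok :: "'w \<Rightarrow> node \<Rightarrow> bool" where
  "barrier_ok w N \<longleftrightarrow>
     (nx N = None \<longrightarrow> bd N = {}) \<and> (\<forall>\<chi>. nx N = Some \<chi> \<longrightarrow> (\<forall>\<psi>\<in>bd N. rank w \<chi> < rank w \<psi>))"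

definition node_sound :: "node \<Rightarrow> status \<Rightarrow> uevf \<Rightarrow> bool" where
  "node_sound N s u \<longleftrightarrow>
     (\<forall>w\<in>W. (\<forall>\<chi>\<in>gam N. holds w \<chi>) \<longrightarrow> barrier_ok w N \<longrightarrow> s = Open \<and> uev_sound (hcr N) w u)"

lemma history_below_le: "history_below H w \<chi> k \<Longrightarrow> k' \<le> k \<Longrightarrow> history_below H w \<chi> k'"
  unfolding history_below_def by (meson le_trans)

lemma history_below_mdepth:
  "history_below H w \<chi> k \<Longrightarrow> mdepth w \<chi> \<le> mdepth w' \<chi>' \<Longrightarrow> history_below H w' \<chi>' k"
  unfolding history_below_def by (meson less_le_trans)

lemma history_below_snoc:
  assumes "history_below (H @ [e]) v \<phi> k" "mdepth v \<phi> \<le> pair_mdepth e" "pair_mdepth e < mdepth w \<chi>"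
  shows "k \<le> length H \<and> history_below H w \<chi> k"
proof -
  obtain j where j: "k \<le> j" "1 \<le> j" "j \<le> Suc (length H)"
    and below: "pair_mdepth ((H @ [e]) ! (j - 1)) < mdepth v \<phi>"
    using assms(1) unfolding history_below_def by auto
  have "j \<noteq> Suc (length H)"
    using below assms(2) by auto
  with j have "j \<le> length H" by simp
  then have "(H @ [e]) ! (j - 1) = H ! (j - 1)"
    using j(2) by (simp add: nth_append_left)
  with below assms(2,3) have "pair_mdepth (H ! (j - 1)) < mdepth w \<chi>" by simp
  with j \<open>j \<le> length H\<close> show ?thesis
    unfolding history_below_def by auto
qed

lemma history_below_hcr_index:
  "e \<in> set H \<Longrightarrow> pair_mdepth e < mdepth w \<chi> \<Longrightarrow> history_below H w \<chi> (hcr_index H e)"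
  using hcr_index_nth unfolding history_below_def by (metis order_refl)

lemma uev_sound_restr: "uev_sound H w u \<Longrightarrow> uev_sound H w (restr \<Gamma> u)"
  unfolding uev_sound_def restr_def by auto

lemma uev_sound_restr_pr:
  "uev_sound H w u \<Longrightarrow> mdepth w \<chi>' \<le> mdepth w \<chi> \<Longrightarrow> uev_sound H w (restr_pr \<chi> \<chi>' \<Gamma> u)"
  unfolding uev_sound_def restr_pr_def by (auto intro: history_below_mdepth)

lemma branch_open_left:
  "s1 = Open \<Longrightarrow> uev_sound H w u1 \<Longrightarrow>
   branch_stat s1 s2 = Open \<and> uev_sound H w (branch_uev s1 s2 u1 u2)"
  unfolding uev_sound_def branch_stat_def branch_uev_def min_bot_def
  by (auto split: option.splits intro: history_below_le[OF _ min.cobounded1])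

lemma branch_open_right:
  "s2 = Open \<Longrightarrow> uev_sound H w u2 \<Longrightarrow>
   branch_stat s1 s2 = Open \<and> uev_sound H w (branch_uev s1 s2 u1 u2)"
  unfolding uev_sound_def branch_stat_def branch_uev_def min_bot_def
  by (auto split: option.splits intro: history_below_le[OF _ min.cobounded2])

lemma barrier_ok_update_gam [simp]: "barrier_ok w (N\<lparr>gam := \<Gamma>\<rparr>) = barrier_ok w N"
  by (simp add: barrier_ok_def)

lemma barrier_ok_update_bb [simp]: "barrier_ok w (N\<lparr>bb := B\<rparr>) = barrier_ok w N"
  by (simp add: barrier_ok_def)

lemma barrier_ok_Dia_child:
  assumes "barrier_ok w N" "nx N \<in> {None, Some \<chi>}" "rank w \<chi>' < rank w \<chi>"
    "X = bd N \<or> X = insert \<chi> (bd N)"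
  shows "barrier_ok w (N\<lparr>gam := \<Gamma>, nx := tst \<chi>', bd := bl \<chi>' X\<rparr>)"
  using assms unfolding barrier_ok_def tst_def bl_def by (auto intro: less_trans)

lemma barred_not_barrier_ok:
  "\<chi> \<in> bd N \<Longrightarrow> nx N \<in> {None, Some \<chi>} \<Longrightarrow> \<not> barrier_ok w N"
  unfolding barrier_ok_def by auto

lemma ex_child_witness:
  assumes "w \<in> W" "\<forall>\<chi>\<in>gam N. holds w \<chi>" "Dia (AP a) \<phi> \<in> gam N"
  shows "\<exists>v\<in>W. (\<forall>\<chi>\<in>gam (ex_child N a \<phi>). holds v \<chi>) \<and> mdepth v \<phi> \<le> pair_mdepth (ex_pair N a \<phi>)
           \<and> pair_mdepth (ex_pair N a \<phi>) < mdepth w (Dia (AP a) \<phi>)"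
proof -
  let ?e = "ex_pair N a \<phi>"
  have pair: "fst ?e = \<phi>" "snd ?e = gam (ex_child N a \<phi>)"
    by (simp_all add: ex_pair_def ex_child_def)
  obtain v m d where depth: "mdepth w (Dia (AP a) \<phi>) = Suc m"
    and "(w, v) \<in> R a" and v: "fulfils v \<phi> m d"
    using holds_fulfils_minimal[OF assms(1)] assms(2,3) by (cases rule: fulfils.cases) blast+
  then have "v \<in> W" "\<forall>\<chi>\<in>snd ?e. holds v \<chi>"
    using model fulfils_holds[OF v] assms(2,3)
    by (auto simp: is_model_def ex_pair_def Delta_def)
  moreover have "mdepth v \<phi> \<le> m" using fulfils_minimal[OF v] by blast
  ultimately have realised: "\<exists>v\<in>W. (\<forall>\<chi>\<in>snd ?e. holds v \<chi>) \<and> mdepth v (fst ?e) \<le> m"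
    using pair by auto
  then have "pair_mdepth ?e \<le> m"
    unfolding pair_mdepth_def by (rule Least_le)
  moreover have "\<exists>v\<in>W. (\<forall>\<chi>\<in>snd ?e. holds v \<chi>) \<and> mdepth v (fst ?e) \<le> pair_mdepth ?e"
    using realised unfolding pair_mdepth_def by (rule LeastI)
  then obtain v' where "v' \<in> W" "\<forall>\<chi>\<in>snd ?e. holds v' \<chi>" "mdepth v' (fst ?e) \<le> pair_mdepth ?e"
    by blast
  ultimately show ?thesis
    using depth pair by (intro bexI[of _ v']) auto
qed

lemma ex_new_sound:
  assumes "node_sound (ex_child N a \<phi>) s u" "w \<in> W" "\<forall>\<chi>\<in>gam N. holds w \<chi>" "ex_new N a \<phi>"
  shows "s = Open \<and>
    (\<forall>\<chi>2 k. u \<phi> \<chi>2 = Some k \<longrightarrow> k \<le> length (hcr N) \<and> history_below (hcr N) w (Dia (AP a) \<phi>) k)"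
proof -
  obtain v where "v \<in> W" "\<forall>\<chi>\<in>gam (ex_child N a \<phi>). holds v \<chi>"
    and v: "mdepth v \<phi> \<le> pair_mdepth (ex_pair N a \<phi>)"
      "pair_mdepth (ex_pair N a \<phi>) < mdepth w (Dia (AP a) \<phi>)"
    using ex_child_witness assms(2-4) unfolding ex_new_def by blast
  moreover have "barrier_ok v (ex_child N a \<phi>)"
    by (simp add: barrier_ok_def ex_child_def)
  ultimately have "s = Open" "uev_sound (hcr N @ [ex_pair N a \<phi>]) v u"
    using assms(1) unfolding node_sound_def by (auto simp: ex_child_def)
  then show ?thesis
    using history_below_snoc[OF _ v] unfolding uev_sound_def by blast
qed

lemma ex_rule_sound:
  assumes children: "\<forall>a \<phi>. ex_new N a \<phi> \<longrightarrow> node_sound (ex_child N a \<phi>) (st a \<phi>) (ue a \<phi>)"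
    and w: "w \<in> W" "\<forall>\<chi>\<in>gam N. holds w \<chi>"
  shows "ex_stat N st ue = Open \<and> uev_sound (hcr N) w (ex_uev N st ue)"
proof -
  note new_sound = ex_new_sound[OF children[rule_format] w]
  have "ex_stat N st ue = Open"
    unfolding ex_stat_def using new_sound by force
  moreover have "history_below (hcr N) w \<chi>1 k" if "ex_uev N st ue \<chi>1 \<chi>2 = Some k" for \<chi>1 \<chi>2 k
  proof -
    have "\<chi>1 \<in> gam N" and k: "(case \<chi>1 of
        Dia (AP a) \<phi> \<Rightarrow> (if ex_new N a \<phi> then ue a \<phi> \<phi> \<chi>2
                           else Some (hcr_index (hcr N) (ex_pair N a \<phi>)))
      | _ \<Rightarrow> None) = Some k"
      using that unfolding ex_uev_def by (auto split: if_splits)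
    then obtain a \<phi> where \<chi>1: "\<chi>1 = Dia (AP a) \<phi>" "\<chi>1 \<in> gam N"
      by (cases \<chi>1) (auto split: prg.splits)
    with k have k: "(if ex_new N a \<phi> then ue a \<phi> \<phi> \<chi>2
               else Some (hcr_index (hcr N) (ex_pair N a \<phi>))) = Some k"
      by simp
    show ?thesis
    proof (cases "ex_new N a \<phi>")
      case True
      with k new_sound \<chi>1(1) show ?thesis by auto
    next
      case False
      then have "ex_pair N a \<phi> \<in> set (hcr N)"
        using \<chi>1 by (simp add: ex_new_def)
      moreover have "pair_mdepth (ex_pair N a \<phi>) < mdepth w \<chi>1"
        using ex_child_witness[OF w] \<chi>1 by blast
      ultimately have "history_below (hcr N) w \<chi>1 (hcr_index (hcr N) (ex_pair N a \<phi>))"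
        by (rule history_below_hcr_index)
      with False k show ?thesis by simp
    qed
  qed
  ultimately show ?thesis
    unfolding uev_sound_def by blast
qed

lemma node_sound_restr:
  assumes "node_sound N' s u" "hcr N' = hcr N"
    and "\<And>w. barrier_ok w N \<Longrightarrow> barrier_ok w N'"
    and "\<And>w. w \<in> W \<Longrightarrow> \<forall>\<chi>\<in>gam N. holds w \<chi> \<Longrightarrow> \<forall>\<chi>\<in>gam N'. holds w \<chi>"
  shows "node_sound N s (restr \<Gamma> u)"
  using assms uev_sound_restr unfolding node_sound_def by metis

lemma node_sound_branch:
  assumes "node_sound N1 s1 u1" "node_sound N2 s2 u2" "hcr N1 = hcr N" "hcr N2 = hcr N"
    and "\<And>w. barrier_ok w N \<Longrightarrow> barrier_ok w N1 \<and> barrier_ok w N2"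
    and "\<And>w. w \<in> W \<Longrightarrow> \<forall>\<chi>\<in>gam N. holds w \<chi> \<Longrightarrow>
           (\<forall>\<chi>\<in>gam N1. holds w \<chi>) \<or> (\<forall>\<chi>\<in>gam N2. holds w \<chi>)"
  shows "node_sound N (branch_stat s1 s2) (branch_uev s1 s2 (restr \<Gamma> u1) (restr \<Gamma> u2))"
  unfolding node_sound_def
proof (intro ballI impI)
  fix w assume w: "w \<in> W" "\<forall>\<chi>\<in>gam N. holds w \<chi>" and "barrier_ok w N"
  note child_sound = assms(1,2)[unfolded node_sound_def, rule_format, OF w(1)]
  from assms(6)[OF w] show "branch_stat s1 s2 = Open \<and>
    uev_sound (hcr N) w (branch_uev s1 s2 (restr \<Gamma> u1) (restr \<Gamma> u2))"
  proof
    assume "\<forall>\<chi>\<in>gam N1. holds w \<chi>"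
    then have "s1 = Open" "uev_sound (hcr N) w (restr \<Gamma> u1)"
      using child_sound(1) assms(3,5) \<open>barrier_ok w N\<close> uev_sound_restr by simp_all
    then show ?thesis by (rule branch_open_left)
  next
    assume "\<forall>\<chi>\<in>gam N2. holds w \<chi>"
    then have "s2 = Open" "uev_sound (hcr N) w (restr \<Gamma> u2)"
      using child_sound(2) assms(4,5) \<open>barrier_ok w N\<close> uev_sound_restr by simp_all
    then show ?thesis by (rule branch_open_right)
  qed
qed

lemma Dia_child_sound:
  assumes "node_sound (N\<lparr>gam := G, nx := tst \<chi>', bd := bl \<chi>' X\<rparr>) s u"
    and "w \<in> W" "\<forall>\<psi>\<in>G. holds w \<psi>" "barrier_ok w N" "nx N \<in> {None, Some \<chi>}"
    and "X = bd N \<or> X = insert \<chi> (bd N)" "local_reduct w \<chi> \<chi>'"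
  shows "s = Open \<and> uev_sound (hcr N) w (restr_pr \<chi> \<chi>' \<Gamma> u)"
proof -
  have "barrier_ok w (N\<lparr>gam := G, nx := tst \<chi>', bd := bl \<chi>' X\<rparr>)"
    using barrier_ok_Dia_child[OF assms(4,5) _ assms(6)] assms(7) unfolding local_reduct_def by blast
  then have "s = Open \<and> uev_sound (hcr N) w u"
    using assms(1)[unfolded node_sound_def, rule_format, OF assms(2)] assms(3) by simp
  then show ?thesis
    using assms(7) uev_sound_restr_pr unfolding local_reduct_def by blast
qed

lemma node_sound_Dia:
  assumes "node_sound (N\<lparr>gam := G, nx := tst \<chi>', bd := bl \<chi>' X\<rparr>) s u"
    and "nx N \<in> {None, Some \<chi>}" "X = bd N \<or> X = insert \<chi> (bd N)"
    and "\<And>w. w \<in> W \<Longrightarrow> \<forall>\<psi>\<in>gam N. holds w \<psi> \<Longrightarrow> local_reduct w \<chi> \<chi>' \<and> (\<forall>\<psi>\<in>G. holds w \<psi>)"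
  shows "node_sound N s (restr_pr \<chi> \<chi>' \<Gamma> u)"
  unfolding node_sound_def
proof (intro ballI impI)
  fix w assume "w \<in> W" "\<forall>\<psi>\<in>gam N. holds w \<psi>" "barrier_ok w N"
  with assms(4) show "s = Open \<and> uev_sound (hcr N) w (restr_pr \<chi> \<chi>' \<Gamma> u)"
    using Dia_child_sound[OF assms(1) \<open>w \<in> W\<close> _ \<open>barrier_ok w N\<close> assms(2,3)] by blast
qed

lemma node_sound_Dia_branch:
  assumes "node_sound (N\<lparr>gam := G1, nx := tst \<chi>1, bd := bl \<chi>1 X\<rparr>) s1 u1"
    and "node_sound (N\<lparr>gam := G2, nx := tst \<chi>2, bd := bl \<chi>2 X\<rparr>) s2 u2"
    and "nx N \<in> {None, Some \<chi>}" "X = bd N \<or> X = insert \<chi> (bd N)"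
    and "\<And>w. w \<in> W \<Longrightarrow> \<forall>\<psi>\<in>gam N. holds w \<psi> \<Longrightarrow>
           local_reduct w \<chi> \<chi>1 \<and> (\<forall>\<psi>\<in>G1. holds w \<psi>) \<or> local_reduct w \<chi> \<chi>2 \<and> (\<forall>\<psi>\<in>G2. holds w \<psi>)"
    and "\<forall>x y k. f1 x y = Some k \<longrightarrow> restr_pr \<chi> \<chi>1 \<Gamma> u1 x y = Some k"
    and "\<forall>x y k. f2 x y = Some k \<longrightarrow> restr_pr \<chi> \<chi>2 \<Gamma> u2 x y = Some k"
  shows "node_sound N (branch_stat s1 s2) (branch_uev s1 s2 f1 f2)"
  unfolding node_sound_def
proof (intro ballI impI)
  fix w assume w: "w \<in> W" "\<forall>\<psi>\<in>gam N. holds w \<psi>" and "barrier_ok w N"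
  note child_sound = Dia_child_sound[OF _ w(1) _ \<open>barrier_ok w N\<close> assms(3,4)]
  have below: "uev_sound (hcr N) w f" if "uev_sound (hcr N) w g" "\<forall>x y k. f x y = Some k \<longrightarrow> g x y = Some k"
    for f g
    using that unfolding uev_sound_def by blast
  from assms(5)[OF w] show "branch_stat s1 s2 = Open \<and> uev_sound (hcr N) w (branch_uev s1 s2 f1 f2)"
  proof
    assume "local_reduct w \<chi> \<chi>1 \<and> (\<forall>\<psi>\<in>G1. holds w \<psi>)"
    then have "s1 = Open" "uev_sound (hcr N) w f1"
      using child_sound[OF assms(1)] below assms(6) by blast+
    then show ?thesis by (rule branch_open_left)
  next
    assume "local_reduct w \<chi> \<chi>2 \<and> (\<forall>\<psi>\<in>G2. holds w \<psi>)"
    then have "s2 = Open" "uev_sound (hcr N) w f2"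
      using child_sound[OF assms(2)] below assms(7) by blast+
    then show ?thesis by (rule branch_open_right)
  qed
qed

lemma tab_sound: "tab N s u \<Longrightarrow> node_sound N s u"
proof (induction rule: tab.induct)
  case (r_id p N)
  then show ?case unfolding node_sound_def by (metis sat.simps(2))
next
  case (r_star2 \<alpha> \<phi> N)
  then show ?case using barred_not_barrier_ok unfolding node_sound_def by blast
next
  case (r_and \<phi> \<psi> N s u)
  show ?case by (rule node_sound_restr[OF r_and.IH]) (use r_and.hyps in auto)
next
  case (r_box_union \<alpha> \<beta> \<phi> N s u)
  show ?case by (rule node_sound_restr[OF r_box_union.IH]) (use r_box_union.hyps in auto)
next
  case (r_box_seq \<alpha> \<beta> \<phi> N s u)
  have "holds w (Box \<alpha> (Box \<beta> \<phi>))" if "\<forall>\<chi>\<in>gam N. holds w \<chi>" for w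
  proof -
    have "holds w (Box (Seq \<alpha> \<beta>) \<phi>)" using that r_box_seq.hyps(1) ..
    then show ?thesis by auto
  qed
  then show ?case
    by (intro node_sound_restr[OF r_box_seq.IH]) (auto simp del: sat.simps)
next
  case (r_box_star \<alpha> \<phi> N s u)
  have "holds w \<phi> \<and> holds w (Box \<alpha> (Box (Star \<alpha>) \<phi>))" if "w \<in> W" "\<forall>\<chi>\<in>gam N. holds w \<chi>" for w
    using that r_box_star.hyps(1) sat_Box_Star_unfold[of W R V w \<alpha> \<phi>] by blast
  then show ?case
    by (intro node_sound_restr[OF r_box_star.IH]) (auto simp del: sat.simps)
next
  case (r_dia_seq \<alpha> \<beta> \<phi> N s u)
  show ?case
    by (rule node_sound_Dia[OF r_dia_seq.IH r_dia_seq.hyps(2)])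
      (use r_dia_seq.hyps(1) in \<open>auto simp: local_reduct_def dest: local_reduct_Seq\<close>)
next
  case (r_dia_test \<psi> \<phi> N s u)
  show ?case
    by (rule node_sound_Dia[OF r_dia_test.IH r_dia_test.hyps(2)])
      (use r_dia_test.hyps(1) in \<open>auto simp: local_reduct_def dest: local_reduct_Test\<close>)
next
  case (r_or \<phi>1 \<phi>2 N s1 u1 s2 u2)
  show ?case by (rule node_sound_branch[OF r_or.IH]) (use r_or.hyps in auto)
next
  case (r_box_test \<psi> \<phi> N s1 u1 s2 u2)
  show ?case
    by (rule node_sound_branch[OF r_box_test.IH]) (use r_box_test.hyps in \<open>auto simp: sat_neg_nnf\<close>)
next
  case (r_dia_union \<alpha>1 \<alpha>2 \<phi> N s1 u1 s2 u2)
  have "local_reduct w (Dia (Choice \<alpha>1 \<alpha>2) \<phi>) (Dia \<alpha>1 \<phi>) \<or>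
        local_reduct w (Dia (Choice \<alpha>1 \<alpha>2) \<phi>) (Dia \<alpha>2 \<phi>)"
    if "w \<in> W" "\<forall>\<psi>\<in>gam N. holds w \<psi>" for w
    using local_reduct_Choice that r_dia_union.hyps(1) by blast
  then show ?case
    by (intro node_sound_Dia_branch[OF r_dia_union.IH r_dia_union.hyps(2)]) (auto simp: local_reduct_def)
next
  case (r_star1 \<alpha> \<phi> N s1 u1 s2 u2)
  have "local_reduct w (Dia (Star \<alpha>) \<phi>) \<phi> \<or>
        local_reduct w (Dia (Star \<alpha>) \<phi>) (Dia \<alpha> (Dia (Star \<alpha>) \<phi>))"
    if "w \<in> W" "\<forall>\<psi>\<in>gam N. holds w \<psi>" for w
    using local_reduct_Star that r_star1.hyps(1) by blast
  then show ?case
    by (intro node_sound_Dia_branch[OF r_star1.IH r_star1.hyps(2)])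
      (auto simp: local_reduct_def restr_pr_def)
next
  case (r_ex N st ue)
  then have "\<forall>a \<phi>. ex_new N a \<phi> \<longrightarrow> node_sound (ex_child N a \<phi>) (st a \<phi>) (ue a \<phi>)"
    by blast
  then show ?case
    unfolding node_sound_def[of N] using ex_rule_sound by blast
qed

end

theorem theorem4p8:
  fixes \<phi> :: fml and s :: status and u :: uevf
  assumes "is_nnf \<phi>"
    and "tab (root_node \<phi>) s u"
    and "s \<noteq> Open"
  shows "\<not> satisfiable TYPE('w) \<phi>"
proof
  \<comment> \<open>Soundness does not need \<open>is_nnf \<phi>\<close>.\<close>
  assume "satisfiable TYPE('w) \<phi>"
  then obtain W :: "'w set" and R V w where "is_model W R V" "w \<in> W" "sat W R V w \<phi>"
    unfolding satisfiable_def by blast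
  interpret pdl_model W R V by (rule pdl_model.intro) fact
  have "node_sound (root_node \<phi>) s u"
    using assms(2) by (rule tab_sound)
  with \<open>w \<in> W\<close> \<open>sat W R V w \<phi>\<close> have "s = Open"
    unfolding node_sound_def by (simp add: root_node_def barrier_ok_def)
  with assms(3) show False ..
qed

end
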